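(* In the model below, let $(\mathbf A^\dagger,\mathbf q^\dagger)$ be any maximizer of $\Omega$ over $\mathcal A\times\mathbb R^n_{\ge0}$ and $\mathbf x^\dagger=\mathbf A^\dagger\mathbf q^\dagger$. Then: (i) If $r(\boldsymbol\gamma)\le1\le R(\boldsymbol\gamma)$, then $\mathbf q^\dagger=\boldsymbol\gamma$ and $\mathbf x^\dagger=\boldsymbol\beta$; moreover, unless there exists $\boldsymbol\sigma\in\{-1,1\}^n$ with $\boldsymbol\sigma^\top\boldsymbol\gamma=1$, every such $\mathbf A^\dagger$ has $\operatorname{rank}(\mathbf A^\dagger)\ge2$. (ii) If $R(\boldsymbol\gamma)\le1$, then $q_i^\dagger=\gamma_i+\dfrac{\alpha(1-R(\boldsymbol\gamma))}{1+n\alpha}$ for all $i$, $\mathbf x^\dagger=R(\mathbf q^\dagger)\boldsymbol\beta$, and $\mathbf A^\dagger$ is unique with $\mathbf a_i^\dagger=\boldsymbol\beta$ for all $i$. (iii) If $r(\boldsymbol\gamma)\ge1$ and $i$ is the index with $\gamma_i=\|\boldsymbol\gamma\|_\infty$, then $q_i^\dagger=\gamma_i-\dfrac{\alpha(r(\boldsymbol\gamma)-1)}{1+n\alpha}$ and $q_j^\dagger=\gamma_j+\dfrac{\alpha(r(\boldsymbol\gamma)-1)}{1+n\alpha}$ for all $j\ne i$, $\mathbf x^\dagger=r(\mathbf q^\dagger)\boldsymbol\beta$, and $\mathbf A^\dagger$ is unique with $\mathbf a_i^\dagger=\boldsymbol\beta$ and $\mathbf a_j^\dagger=-\boldsymbol\beta$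 for all $j\ne i$.
   Context: Model: integers $n\ge2$, $m\ge2$; parameters $\alpha>0$, $\boldsymbol\beta\in\mathbb R^m$ with $\|\boldsymbol\beta\|_2=1$, $\boldsymbol\gamma\in\mathbb R^n$ with $\gamma_i>0$ for all $i$. $\mathcal A$ is the set of real $m\times n$ matrices $\mathbf A=[\mathbf a_1,\dots,\mathbf a_n]$ with $\|\mathbf a_i\|_2=1$ for all $i$. With $\mathbf x=\mathbf A\mathbf q$, total surplus is $\Omega(\mathbf A,\mathbf q)=\alpha(\mathbf x^\top\boldsymbol\beta-\tfrac12\mathbf x^\top\mathbf x)+\mathbf q^\top\boldsymbol\gamma-\tfrac12\mathbf q^\top\mathbf q$. For $\mathbf v\in\mathbb R^n$: $R(\mathbf v)=\|\mathbf v\|_1$, $r(\mathbf v)=2\|\mathbf v\|_\infty-\|\mathbf v\|_1$. *)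

theory Defs
  imports "HOL-Analysis.Analysis"
begin

text \<open>Vectors in R^n are real^'n, in R^m are real^'m; an m x n matrix is real^'n^'m
  (m rows, n columns); its i-th column is column i A.\<close>

definition l1norm :: "real^'n \<Rightarrow> real" where
  "l1norm v = (\<Sum>i\<in>UNIV. \<bar>v $ i\<bar>)"

definition linfnorm :: "real^'n \<Rightarrow> real" where
  "linfnorm v = Max ((\<lambda>i. \<bar>v $ i\<bar>) ` UNIV)"

definition Rf :: "real^'n \<Rightarrow> real" where
  "Rf v = l1norm v"

definition rf :: "real^'n \<Rightarrow> real" where
  "rf v = 2 * linfnorm v - l1norm v"

definition unitcols :: "(real^'n^'m) set" where
  "unitcols = {A. \<forall>i. norm (column i A) = 1}"

definition Omega :: "real \<Rightarrow> real^'m \<Rightarrow> real^'n \<Rightarrow> real^'n^'m \<Rightarrow> real^'n \<Rightarrow> real" where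
  "Omega \<alpha> \<beta> \<gamma> A q =
     (let x = A *v q in \<alpha> * (x \<bullet> \<beta> - (1/2) * (x \<bullet> x)) + q \<bullet> \<gamma> - (1/2) * (q \<bullet> q))"

definition is_maximizer :: "real \<Rightarrow> real^'m \<Rightarrow> real^'n \<Rightarrow> real^'n^'m \<Rightarrow> real^'n \<Rightarrow> bool" where
  "is_maximizer \<alpha> \<beta> \<gamma> A q \<longleftrightarrow>
     A \<in> unitcols \<and> (\<forall>i. q $ i \<ge> 0) \<and>
     (\<forall>A' q'. A' \<in> unitcols \<and> (\<forall>i. q' $ i \<ge> 0) \<longrightarrow> Omega \<alpha> \<beta> \<gamma> A' q' \<le> Omega \<alpha> \<beta> \<gamma> A q)"

end

theory Submission
  imports Defs
begin

(* Since norm beta = 1, Omega A q = (alpha + norm gamma^2 - P A q) / 2 with the penalty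
   P A q = alpha * norm (A q - beta)^2 + norm (q - gamma)^2, so a maximizer minimises P.
   Suppose norm (A q - beta) >= l . q - t for all feasible (A, q), and some feasible (B, q0) with
   q0 = gamma - alpha rho l and rho = l . q0 - t >= 0 has norm (B q0 - beta) = rho. Since q0
   minimises alpha * (l . q - t)^2 + norm (q - gamma)^2, strong convexity forces q = q0 and
   norm (A q - beta) <= rho for every maximizer, and the equality cases of Cauchy-Schwarz then
   determine the columns of A.
   For R gamma <= 1 take l = -1, t = -1 and all columns of B equal to beta; for r gamma >= 1 take
   l = 1 at the largest entry of gamma and -1 elsewhere, t = 1, and columns l_k beta. For
   r gamma <= 1 <= R gamma take l = 0, t = 0, q0 = gamma and B gamma = beta; such a B exists because
   a closed planar polygon with sides gamma_1, ..., gamma_n, 1 exists when no side is longer than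
   the sum of the others. *)

definition matrix_of_columns :: "('n \<Rightarrow> real^'m) \<Rightarrow> real^'n^'m" where
  "matrix_of_columns f = transpose (\<chi> k. f k)"

lemma column_matrix_of_columns [simp]: "column k (matrix_of_columns f) = f k"
  by (simp add: matrix_of_columns_def row_def)

lemma matrix_of_columns_unitcols: "(\<And>k. norm (f k) = 1) \<Longrightarrow> matrix_of_columns f \<in> unitcols"
  by (simp add: unitcols_def)

lemma matrix_vector_mult_columns: "A *v q = (\<Sum>k\<in>UNIV. q$k *\<^sub>R column k A)"
  by (simp add: matrix_mult_sum scalar_mult_eq_scaleR)

lemma inner_matrix_vector_mult: "b \<bullet> (A *v q) = (\<Sum>k\<in>UNIV. q$k * (b \<bullet> column k A))"
  by (simp add: matrix_vector_mult_columns inner_sum_right)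

lemma matrix_vector_mult_scaled_columns:
  assumes "\<forall>k. column k A = s$k *\<^sub>R b"
  shows "A *v v = (s \<bullet> v) *\<^sub>R b"
  using assms by (simp add: matrix_vector_mult_columns inner_vec_def scaleR_sum_left mult.commute)

lemma inner_one_vec: "(1::real^'n) \<bullet> v = (\<Sum>k\<in>UNIV. v$k)"
  by (simp add: inner_vec_def)

lemma inner_one_one: "(1::real^'n) \<bullet> 1 = real CARD('n)"
  by (simp add: inner_one_vec)

lemma norm_mult_unitcols_le:
  assumes "A \<in> unitcols" "\<forall>k. 0 \<le> q$k"
  shows "norm (A *v q) \<le> 1 \<bullet> q"
proof -
  have "norm (A *v q) \<le> (\<Sum>k\<in>UNIV. norm (q$k *\<^sub>R column k A))"
    unfolding matrix_vector_mult_columns by (rule norm_sum)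
  also have "\<dots> = 1 \<bullet> q"
    using assms by (simp add: unitcols_def inner_one_vec)
  finally show ?thesis .
qed

lemma l1norm_eq_inner_one: "\<forall>k. 0 \<le> v$k \<Longrightarrow> l1norm v = 1 \<bullet> v"
  by (simp add: l1norm_def inner_one_vec)

lemma abs_nth_le_linfnorm: "\<bar>v$k\<bar> \<le> linfnorm v"
  by (simp add: linfnorm_def)

lemma linfnorm_eq_abs_nth: "(\<And>k. \<bar>v$k\<bar> \<le> \<bar>v$i\<bar>) \<Longrightarrow> linfnorm v = \<bar>v$i\<bar>"
  unfolding linfnorm_def by (rule Max_eqI) auto

lemma unit_vector_inner_bounds:
  fixes a b :: "'a::real_inner"
  assumes "norm a = 1" "norm b = 1"
  shows "-1 \<le> a \<bullet> b" and "a \<bullet> b \<le> 1"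
  using Cauchy_Schwarz_ineq2[of a b] assms by auto

lemma unit_vector_eq_if_inner_ge:
  fixes a b :: "'a::real_inner"
  assumes "norm a = 1" "norm b = 1" "1 \<le> a \<bullet> b"
  shows "a = b"
proof -
  have "a \<bullet> a = 1" "b \<bullet> b = 1" using assms by (simp_all add: dot_square_norm)
  then have "norm (a - b)^2 = 2 - 2 * (a \<bullet> b)"
    by (simp add: power2_norm_eq_inner inner_diff inner_commute)
  then have "norm (a - b)^2 \<le> 0" using assms by simp
  then show ?thesis by simp
qed

lemma unit_vector_eq_neg_if_inner_le:
  fixes a b :: "'a::real_inner"
  assumes "norm a = 1" "norm b = 1" "a \<bullet> b \<le> -1"
  shows "a = - b"
  using unit_vector_eq_if_inner_ge[of a "- b"] assms by simp

lemma unit_vector_eq_if_scaled_dist_le: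
  fixes a b :: "'a::real_inner"
  assumes "norm a = 1" "norm b = 1" "0 < L" "norm (L *\<^sub>R a - b) \<le> L - 1"
  shows "a = b"
proof -
  have "a \<bullet> a = 1" "b \<bullet> b = 1" using assms by (simp_all add: dot_square_norm)
  then have "norm (L *\<^sub>R a - b)^2 = (L - 1)^2 + 2 * L * (1 - a \<bullet> b)"
    unfolding power2_norm_eq_inner by (simp add: inner_diff inner_commute power2_eq_square algebra_simps)
  moreover have "norm (L *\<^sub>R a - b)^2 \<le> (L - 1)^2"
    using assms(4) by (simp add: power_mono)
  ultimately have "1 \<le> a \<bullet> b" using \<open>0 < L\<close> by (simp add: mult_le_0_iff)
  then show ?thesis using assms unit_vector_eq_if_inner_ge by blast
qed

lemma inner_column_eq_if_weighted_sum_le: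
  fixes A :: "real^'n^'m"
  assumes q_pos: "\<forall>k. 0 < q$k" and c_le: "\<forall>k. c k \<le> b \<bullet> column k A"
    and sum_le: "b \<bullet> (A *v q) \<le> (\<Sum>k\<in>UNIV. q$k * c k)"
  shows "b \<bullet> column k A = c k"
proof -
  have le: "q$j * c j \<le> q$j * (b \<bullet> column j A)" for j
    using q_pos c_le by (simp add: less_imp_le mult_left_mono)
  then have "(\<Sum>j\<in>UNIV. q$j * c j) \<le> (\<Sum>j\<in>UNIV. q$j * (b \<bullet> column j A))"
    by (rule sum_mono)
  then have "(\<Sum>j\<in>UNIV. q$j * c j) = (\<Sum>j\<in>UNIV. q$j * (b \<bullet> column j A))"
    using sum_le by (simp add: inner_matrix_vector_mult)
  then have "q$k * c k = q$k * (b \<bullet> column k A)"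
    using le by (rule sum_mono_inv) auto
  then show ?thesis using q_pos by (metis less_irrefl mult_cancel_left)
qed

lemma unitcols_columns_eq_if_inner_mult_ge:
  fixes A :: "real^'n^'m"
  assumes A: "A \<in> unitcols" and b: "norm b = 1" and q_pos: "\<forall>k. 0 < q$k"
    and "1 \<bullet> q \<le> b \<bullet> (A *v q)"
  shows "column k A = b"
proof -
  have "(-b) \<bullet> (A *v q) \<le> (\<Sum>k\<in>UNIV. q$k * -1)"
    using assms by (simp add: inner_one_vec sum_negf)
  moreover have "\<forall>k. -1 \<le> (-b) \<bullet> column k A"
    using A b unit_vector_inner_bounds(2) by (auto simp: unitcols_def)
  ultimately have "(-b) \<bullet> column k A = -1"
    using q_pos by (intro inner_column_eq_if_weighted_sum_le) auto
  then show ?thesis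
    using A b unit_vector_eq_if_inner_ge[of "column k A" b] by (simp add: unitcols_def inner_commute)
qed

section \<open>The penalty form of the surplus\<close>

lemma Omega_eq_penalty:
  assumes "norm \<beta> = 1"
  shows "Omega \<alpha> \<beta> \<gamma> A q =
    (\<alpha> + norm \<gamma>^2 - (\<alpha> * norm (A *v q - \<beta>)^2 + norm (q - \<gamma>)^2)) / 2"
proof -
  have "\<beta> \<bullet> \<beta> = 1" using assms by (simp add: dot_square_norm)
  then show ?thesis
    unfolding Omega_def Let_def power2_norm_eq_inner
    by (simp add: inner_diff inner_commute field_simps)
qed

lemma maximizer_penalty_le:
  assumes "is_maximizer \<alpha> \<beta> \<gamma> A q" "norm \<beta> = 1" "B \<in> unitcols" "\<forall>k. 0 \<le> q'$k"
  shows "\<alpha> * norm (A *v q - \<beta>)^2 + norm (q - \<gamma>)^2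
    \<le> \<alpha> * norm (B *v q' - \<beta>)^2 + norm (q' - \<gamma>)^2"
proof -
  have "Omega \<alpha> \<beta> \<gamma> B q' \<le> Omega \<alpha> \<beta> \<gamma> A q"
    using assms(1,3,4) by (simp add: is_maximizer_def)
  then show ?thesis by (simp add: Omega_eq_penalty[OF assms(2)])
qed

lemma square_tangent_le:
  fixes \<rho> u d :: real
  assumes "0 \<le> \<rho>" "0 \<le> d" "\<rho> + u \<le> d"
  shows "\<rho>^2 + 2 * \<rho> * u \<le> d^2"
proof (cases "0 \<le> \<rho> + u")
  case True
  have "\<rho>^2 + 2 * \<rho> * u \<le> (\<rho> + u)^2" by (simp add: power2_sum)
  also have "\<dots> \<le> d^2" using True assms by (simp add: power_mono)
  finally show ?thesis .
next
  case False
  have "\<rho>^2 + 2 * \<rho> * u = \<rho> * (\<rho> + 2 * u)" by (simp add: power2_eq_square algebra_simps)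
  also have "\<dots> \<le> 0" using False assms by (intro mult_nonneg_nonpos) auto
  finally show ?thesis using zero_le_power2[of d] by linarith
qed

(* q0 minimises alpha * (l . q - t)^2 + norm (q - gamma)^2. *)
lemma penalty_ge_competitor:
  fixes q \<gamma> l :: "'a::real_inner"
  assumes "0 \<le> \<alpha>" "0 \<le> \<rho>" "0 \<le> d"
    and q\<^sub>0: "q\<^sub>0 = \<gamma> - (\<alpha> * \<rho>) *\<^sub>R l" and level: "l \<bullet> q\<^sub>0 - t = \<rho>"
    and d: "l \<bullet> q - t \<le> d"
  shows "\<alpha> * \<rho>^2 + norm (q\<^sub>0 - \<gamma>)^2 + norm (q - q\<^sub>0)^2 \<le> \<alpha> * d^2 + norm (q - \<gamma>)^2"
proof -
  define u where "u = l \<bullet> (q - q\<^sub>0)"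
  have "norm (q - \<gamma>)^2 = norm ((q - q\<^sub>0) + (q\<^sub>0 - \<gamma>))^2" by simp
  also have "\<dots> = norm (q - q\<^sub>0)^2 - 2 * (\<alpha> * \<rho>) * u + norm (q\<^sub>0 - \<gamma>)^2"
    unfolding power2_norm_eq_inner u_def q\<^sub>0
    by (simp add: inner_add inner_diff inner_commute algebra_simps)
  finally have expand: "norm (q - \<gamma>)^2 = norm (q - q\<^sub>0)^2 - 2 * (\<alpha> * \<rho>) * u + norm (q\<^sub>0 - \<gamma>)^2" .
  have "\<rho> + u \<le> d" using level d by (simp add: u_def inner_diff_right)
  then have "\<rho>^2 + 2 * \<rho> * u \<le> d^2" using assms by (intro square_tangent_le)
  then have "\<alpha> * (\<rho>^2 + 2 * \<rho> * u) \<le> \<alpha> * d^2" using assms by (simp add: mult_left_mono)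
  then show ?thesis unfolding expand by (simp add: algebra_simps)
qed

lemma maximizer_eq_competitor:
  assumes max: "is_maximizer \<alpha> \<beta> \<gamma> A q" and "0 < \<alpha>" and beta: "norm \<beta> = 1"
    and B: "B \<in> unitcols" and q\<^sub>0_nonneg: "\<forall>k. 0 \<le> q\<^sub>0$k"
    and B_dist: "norm (B *v q\<^sub>0 - \<beta>) = \<rho>"
    and "0 \<le> \<rho>" and "q\<^sub>0 = \<gamma> - (\<alpha> * \<rho>) *\<^sub>R l" and "l \<bullet> q\<^sub>0 - t = \<rho>"
    and "l \<bullet> q - t \<le> norm (A *v q - \<beta>)"
  shows "q = q\<^sub>0" and "norm (A *v q - \<beta>) \<le> \<rho>"
proof -
  let ?d = "norm (A *v q - \<beta>)"
  have upper: "\<alpha> * ?d^2 + norm (q - \<gamma>)^2 \<le> \<alpha> * \<rho>^2 + norm (q\<^sub>0 - \<gamma>)^2"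
    using maximizer_penalty_le[OF max beta B q\<^sub>0_nonneg] B_dist by simp
  have lower: "\<alpha> * \<rho>^2 + norm (q\<^sub>0 - \<gamma>)^2 + norm (q - q\<^sub>0)^2 \<le> \<alpha> * ?d^2 + norm (q - \<gamma>)^2"
    using assms by (intro penalty_ge_competitor) auto
  have "norm (q - q\<^sub>0)^2 \<le> 0" using upper lower by linarith
  then show "q = q\<^sub>0" by simp
  then have "\<alpha> * ?d^2 \<le> \<alpha> * \<rho>^2" using upper by simp
  then show "?d \<le> \<rho>" using \<open>0 < \<alpha>\<close> \<open>0 \<le> \<rho>\<close> by (simp add: power2_le_iff_abs_le)
qed

section \<open>Closing a polygon\<close>

lemma exists_unit_at_distance:
  fixes z :: complex
  assumes "0 \<le> g" "\<bar>cmod z - g\<bar> \<le> \<rho>" "\<rho> \<le> cmod z + g"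
  obtains w where "cmod w = 1" "cmod (z - of_real g * w) = \<rho>"
proof -
  define u where "u = (if z = 0 then 1 else sgn z)"
  have u: "cmod u = 1" "z = of_real (cmod z) * u"
    by (simp_all add: u_def norm_sgn) (simp add: sgn_div_norm scaleR_conv_of_real)
  define f where "f \<theta> = cmod (of_real (cmod z) - of_real g * cis \<theta>)" for \<theta>
  have "continuous_on {0..pi} f" unfolding f_def by (intro continuous_intros)
  moreover have "f 0 = \<bar>cmod z - g\<bar>"
    unfolding f_def by (metis cis_zero mult.right_neutral norm_of_real of_real_diff)
  moreover have "f pi = cmod z + g"
    unfolding f_def using \<open>0 \<le> g\<close> by (simp flip: of_real_add)
  ultimately obtain \<theta> where "f \<theta> = \<rho>"
    using IVT'[of f 0 \<rho> pi] assms(2,3) by auto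
  moreover have "z - of_real g * (u * cis \<theta>) = u * (of_real (cmod z) - of_real g * cis \<theta>)"
    by (subst u(2)) (simp add: algebra_simps)
  ultimately show ?thesis
    using that[of "u * cis \<theta>"] u(1) by (simp add: f_def norm_mult)
qed

(* The side g j * w0 is chosen so that the remaining distance min P (cmod z + g j)
   lies in the annulus reachable by the other sides. *)
lemma exists_unit_weighted_sum_eq:
  fixes g :: "'a \<Rightarrow> real" and z :: complex
  assumes "finite S" "\<forall>k\<in>S. 0 < g k"
    and "cmod z \<le> sum g S" "\<forall>k\<in>S. 2 * g k - sum g S \<le> cmod z"
  shows "\<exists>w. (\<forall>k. cmod (w k) = 1) \<and> (\<Sum>k\<in>S. of_real (g k) * w k) = z"
  using assms
proof (induction S arbitrary: z rule: finite_induct)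
  case empty
  then show ?case by (intro exI[of _ "\<lambda>_. 1"]) simp
next
  case (insert j S)
  define P where "P = sum g S"
  have sum_insert: "sum g (insert j S) = g j + P"
    using insert.hyps by (simp add: P_def)
  have g_le_P: "g k \<le> P" if "k \<in> S" for k
    unfolding P_def using insert that by (intro member_le_sum) (auto intro: less_imp_le)
  define \<rho> where "\<rho> = min P (cmod z + g j)"
  have "\<bar>cmod z - g j\<bar> \<le> \<rho>" "\<rho> \<le> cmod z + g j" "0 \<le> g j"
    using insert.prems sum_insert by (auto simp: \<rho>_def abs_le_iff)
  then obtain w\<^sub>0 where w\<^sub>0: "cmod w\<^sub>0 = 1" "cmod (z - of_real (g j) * w\<^sub>0) = \<rho>"
    using exists_unit_at_distance by metis
  have "\<exists>w. (\<forall>k. cmod (w k) = 1) \<and> (\<Sum>k\<in>S. of_real (g k) * w k) = z - of_real (g j) * w\<^sub>0"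
  proof (rule insert.IH)
    show "\<forall>k\<in>S. 2 * g k - sum g S \<le> cmod (z - of_real (g j) * w\<^sub>0)"
      using insert.prems g_le_P sum_insert by (force simp: w\<^sub>0(2) \<rho>_def P_def)
  qed (use insert.prems w\<^sub>0(2) in \<open>auto simp: \<rho>_def P_def\<close>)
  then obtain w where w: "\<forall>k. cmod (w k) = 1"
    "(\<Sum>k\<in>S. of_real (g k) * w k) = z - of_real (g j) * w\<^sub>0"
    by blast
  have "(\<Sum>k\<in>insert j S. of_real (g k) * (w(j := w\<^sub>0)) k)
      = of_real (g j) * w\<^sub>0 + (\<Sum>k\<in>S. of_real (g k) * w k)"
    using insert.hyps by (auto intro!: sum.cong)
  then show ?case using w w\<^sub>0(1) by (intro exI[of _ "w(j := w\<^sub>0)"]) auto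
qed

lemma exists_unitcols_mult_eq:
  fixes \<gamma> :: "real^'n" and \<beta> :: "real^'m"
  assumes "2 \<le> CARD('m)" and beta: "norm \<beta> = 1" and "\<forall>k. 0 < \<gamma>$k"
    and "\<forall>k. 2 * \<gamma>$k - 1 \<bullet> \<gamma> \<le> 1" and "1 \<le> 1 \<bullet> \<gamma>"
  obtains B where "B \<in> unitcols" and "B *v \<gamma> = \<beta>"
proof -
  obtain e0 :: "real^'m" where "e0 \<noteq> 0" "orthogonal \<beta> e0"
    using orthogonal_to_vector_exists[of \<beta>] \<open>2 \<le> CARD('m)\<close> by auto
  define e where "e = e0 /\<^sub>R norm e0"
  have frame: "\<beta> \<bullet> \<beta> = 1" "e \<bullet> e = 1" "\<beta> \<bullet> e = 0"
    using beta \<open>e0 \<noteq> 0\<close> \<open>orthogonal \<beta> e0\<close>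
    by (auto simp: e_def dot_square_norm orthogonal_def)
  obtain w where w: "\<forall>k. cmod (w k) = 1" "(\<Sum>k\<in>UNIV. of_real (\<gamma>$k) * w k) = (1::complex)"
    using exists_unit_weighted_sum_eq[of UNIV "\<lambda>k. \<gamma>$k" 1] assms by (auto simp: inner_one_vec)
  define f where "f z = Re z *\<^sub>R \<beta> + Im z *\<^sub>R e" for z
  have "f z \<bullet> f z = (Re z)^2 + (Im z)^2" for z
    using frame by (simp add: f_def inner_add inner_commute power2_eq_square)
  then have norm_f: "norm (f z) = cmod z" for z
    by (metis norm_eq_sqrt_inner cmod_def)
  define B :: "real^'n^'m" where "B = matrix_of_columns (\<lambda>k. f (w k))"
  have "B \<in> unitcols"
    unfolding B_def using w(1) norm_f by (intro matrix_of_columns_unitcols) simp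
  moreover have "B *v \<gamma> = f (\<Sum>k\<in>UNIV. of_real (\<gamma>$k) * w k)"
    by (simp add: B_def matrix_vector_mult_columns f_def Re_sum Im_sum
        scaleR_add_right sum.distrib scaleR_sum_left)
  ultimately show ?thesis using that w(2) by (simp add: f_def)
qed

lemma two_le_rank_if_columns_not_parallel:
  fixes A :: "real^'n^'m"
  assumes unit: "norm (column j A) = 1" "norm (column k A) = 1"
    and "column k A \<noteq> column j A" "column k A \<noteq> - column j A"
  shows "2 \<le> rank A"
proof -
  have "column j A \<notin> span {column k A}"
  proof
    assume "column j A \<in> span {column k A}"
    then obtain t where t: "column j A = t *\<^sub>R column k A"
      by (auto simp: span_singleton)
    then have "\<bar>t\<bar> = 1" using unit by simp
    then show False using t assms by (auto simp: abs_if split: if_splits)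
  qed
  then have "independent {column j A, column k A}"
    using unit by (auto simp: independent_insert)
  then have "card {column j A, column k A} \<le> dim (columns A)"
    by (intro independent_card_le_dim) (auto simp: columns_def)
  then show ?thesis using assms by (simp add: column_rank_def)
qed

lemma exists_sign_vector_if_columns_parallel:
  fixes A :: "real^'n^'m"
  assumes unit: "norm (column j A) = 1"
    and parallel: "\<forall>k. column k A = column j A \<or> column k A = - column j A"
    and "A *v \<gamma> = \<beta>" "norm \<beta> = 1"
  shows "\<exists>\<sigma>::real^'n. (\<forall>i. \<sigma>$i = 1 \<or> \<sigma>$i = -1) \<and> \<sigma> \<bullet> \<gamma> = 1"
proof -
  define \<sigma> :: "real^'n" where "\<sigma> = (\<chi> k. if column k A = column j A then 1 else -1)"
  have signs: "\<forall>i. \<sigma>$i = 1 \<or> \<sigma>$i = -1" "\<forall>i. (-\<sigma>)$i = 1 \<or> (-\<sigma>)$i = -1"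
    by (auto simp: \<sigma>_def)
  have "\<forall>k. column k A = \<sigma>$k *\<^sub>R column j A"
    using parallel by (auto simp: \<sigma>_def)
  then have "A *v \<gamma> = (\<sigma> \<bullet> \<gamma>) *\<^sub>R column j A"
    by (rule matrix_vector_mult_scaled_columns)
  then have "\<bar>\<sigma> \<bullet> \<gamma>\<bar> = 1" using unit \<open>A *v \<gamma> = \<beta>\<close> \<open>norm \<beta> = 1\<close> by simp
  then have "\<sigma> \<bullet> \<gamma> = 1 \<or> (-\<sigma>) \<bullet> \<gamma> = 1" by (cases "0 \<le> \<sigma> \<bullet> \<gamma>") auto
  then show ?thesis using signs by blast
qed

definition pivot_signs :: "'n \<Rightarrow> real^'n" where
  "pivot_signs i = 2 *\<^sub>R axis i 1 - 1"

lemma pivot_signs_nth: "pivot_signs i $ k = (if k = i then 1 else -1)"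
  by (simp add: pivot_signs_def axis_def)

lemma inner_pivot_signs: "pivot_signs i \<bullet> v = 2 * v$i - 1 \<bullet> v"
  by (simp add: pivot_signs_def inner_diff_left inner_axis')

lemma inner_pivot_signs_self: "pivot_signs (i::'n::finite) \<bullet> pivot_signs i = real CARD('n)"
proof -
  have "pivot_signs i $ k * pivot_signs i $ k = 1" for k by (simp add: pivot_signs_nth)
  then show ?thesis by (simp add: inner_vec_def)
qed

lemma rf_eq_inner_pivot_signs:
  assumes "\<forall>k. 0 \<le> v$k" "\<forall>k. v$k \<le> v$i"
  shows "rf v = pivot_signs i \<bullet> v"
proof -
  have "linfnorm v = v$i" using assms by (subst linfnorm_eq_abs_nth[of v i]) auto
  then show ?thesis using assms by (simp add: rf_def l1norm_eq_inner_one inner_pivot_signs)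
qed

lemma pivot_entry_max_if_inner_pivot_signs_ge_1:
  fixes v :: "real^'n"
  assumes nonneg: "\<forall>k. k \<noteq> i \<longrightarrow> 0 \<le> v$k" and ge: "1 \<le> pivot_signs i \<bullet> v"
  shows "0 < v$i" and "v$k \<le> v$i"
proof -
  have partial: "sum (($) v) S \<le> 1 \<bullet> v" if "i \<in> S" for S
    unfolding inner_one_vec using that nonneg by (intro sum_mono2) auto
  show "0 < v$i" using partial[of "{i}"] ge by (simp add: inner_pivot_signs)
  show "v$k \<le> v$i"
  proof (cases "k = i")
    case False
    then show ?thesis using partial[of "{i, k}"] ge nonneg by (simp add: inner_pivot_signs)
  qed simp
qed

lemma pivot_signs_le_inner_columns:
  assumes "A \<in> unitcols"
  shows "pivot_signs i $ k \<le> column i A \<bullet> column k A"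
  using assms unit_vector_inner_bounds(1)[of "column i A" "column k A"]
  by (auto simp: unitcols_def pivot_signs_nth dot_square_norm)

lemma inner_pivot_signs_le_inner_column:
  assumes "A \<in> unitcols" "\<forall>k. 0 \<le> q$k"
  shows "pivot_signs i \<bullet> q \<le> column i A \<bullet> (A *v q)"
proof -
  have "(\<Sum>k\<in>UNIV. q$k * pivot_signs i $ k) \<le> (\<Sum>k\<in>UNIV. q$k * (column i A \<bullet> column k A))"
    using assms pivot_signs_le_inner_columns by (intro sum_mono mult_left_mono) auto
  moreover have "pivot_signs i \<bullet> q = (\<Sum>k\<in>UNIV. q$k * pivot_signs i $ k)"
    by (simp add: inner_vec_def mult.commute)
  ultimately show ?thesis by (simp add: inner_matrix_vector_mult)
qed

lemma unitcols_columns_eq_pivot_signs_if_inner_mult_le: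
  fixes A :: "real^'n^'m"
  assumes A: "A \<in> unitcols" and q_pos: "\<forall>k. 0 < q$k"
    and "column i A \<bullet> (A *v q) \<le> pivot_signs i \<bullet> q"
  shows "column k A = pivot_signs i $ k *\<^sub>R column i A"
proof -
  have unit: "norm (column k A) = 1" "norm (column i A) = 1" using A by (simp_all add: unitcols_def)
  have "column i A \<bullet> (A *v q) \<le> (\<Sum>k\<in>UNIV. q$k * pivot_signs i $ k)"
    using assms by (simp add: inner_vec_def mult.commute)
  then have "column i A \<bullet> column k A = pivot_signs i $ k"
    using pivot_signs_le_inner_columns[OF A] q_pos by (intro inner_column_eq_if_weighted_sum_le) auto
  then show ?thesis
    using unit unit_vector_eq_neg_if_inner_le[of "column k A" "column i A"]
    by (cases "k = i") (auto simp: pivot_signs_nth inner_commute)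
qed

section \<open>The three regimes\<close>

lemma maximizer_balanced_case:
  fixes A :: "real^'n^'m"
  assumes m2: "2 \<le> CARD('m)" and alpha: "0 < \<alpha>" and beta: "norm \<beta> = 1"
    and gamma: "\<forall>k. 0 < \<gamma>$k" and max: "is_maximizer \<alpha> \<beta> \<gamma> A q"
    and balanced: "rf \<gamma> \<le> 1" "1 \<le> Rf \<gamma>"
  shows "q = \<gamma>" and "A *v q = \<beta>"
    and "\<not> (\<exists>\<sigma>::real^'n. (\<forall>i. \<sigma>$i = 1 \<or> \<sigma>$i = -1) \<and> \<sigma> \<bullet> \<gamma> = 1) \<Longrightarrow> 2 \<le> rank A"
proof -
  have Rf_\<gamma>: "Rf \<gamma> = 1 \<bullet> \<gamma>"
    using gamma by (simp add: Rf_def l1norm_eq_inner_one less_imp_le)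
  have "2 * \<gamma>$k - 1 \<bullet> \<gamma> \<le> 1" for k
    using balanced abs_nth_le_linfnorm[of \<gamma> k] gamma
    by (simp add: rf_def Rf_\<gamma>[unfolded Rf_def] less_imp_le)
  then obtain B where B: "B \<in> unitcols" "B *v \<gamma> = \<beta>"
    using exists_unitcols_mult_eq[OF m2 beta gamma] balanced(2) Rf_\<gamma> by auto
  have "q = \<gamma> \<and> norm (A *v q - \<beta>) \<le> 0"
    using maximizer_eq_competitor[OF max alpha beta B(1), where \<rho> = 0 and l = 0 and t = 0]
      gamma B(2) by (simp add: less_imp_le)
  then show q: "q = \<gamma>" and x: "A *v q = \<beta>" by auto
  assume no_sign: "\<not> (\<exists>\<sigma>::real^'n. (\<forall>i. \<sigma>$i = 1 \<or> \<sigma>$i = -1) \<and> \<sigma> \<bullet> \<gamma> = 1)"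
  have unit: "norm (column k A) = 1" for k
    using max by (simp add: is_maximizer_def unitcols_def)
  obtain j :: 'n where True by blast
  obtain k where "column k A \<noteq> column j A" "column k A \<noteq> - column j A"
    using exists_sign_vector_if_columns_parallel[OF unit, of j \<gamma> \<beta>] q x beta no_sign by blast
  then show "2 \<le> rank A" using two_le_rank_if_columns_not_parallel unit by blast
qed

lemma maximizer_short_case:
  fixes A :: "real^'n^'m"
  assumes alpha: "0 < \<alpha>" and beta: "norm \<beta> = 1" and gamma: "\<forall>k. 0 < \<gamma>$k"
    and max: "is_maximizer \<alpha> \<beta> \<gamma> A q" and short: "Rf \<gamma> \<le> 1"
  shows "\<forall>k. q$k = \<gamma>$k + \<alpha> * (1 - Rf \<gamma>) / (1 + real CARD('n) * \<alpha>)"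
    and "\<forall>k. column k A = \<beta>" and "A *v q = Rf q *\<^sub>R \<beta>"
proof -
  define \<rho> where "\<rho> = (1 - Rf \<gamma>) / (1 + real CARD('n) * \<alpha>)"
  define q\<^sub>0 :: "real^'n" where "q\<^sub>0 = \<gamma> + (\<alpha> * \<rho>) *\<^sub>R 1"
  define B :: "real^'n^'m" where "B = matrix_of_columns (\<lambda>k. \<beta>)"
  have den: "0 < 1 + real CARD('n) * \<alpha>" using alpha by (simp add: add_pos_pos)
  have "0 \<le> \<rho>" using short den by (simp add: \<rho>_def)
  have "Rf \<gamma> = 1 \<bullet> \<gamma>" using gamma by (simp add: Rf_def l1norm_eq_inner_one less_imp_le)
  then have level: "1 \<bullet> q\<^sub>0 = 1 - \<rho>"
    using den by (simp add: q\<^sub>0_def \<rho>_def inner_add_right inner_one_one field_simps)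
  have q\<^sub>0_pos: "\<forall>k. 0 < q\<^sub>0$k"
    using gamma alpha \<open>0 \<le> \<rho>\<close> by (simp add: q\<^sub>0_def add_pos_nonneg)
  have "B \<in> unitcols" using beta by (simp add: B_def matrix_of_columns_unitcols)
  have "B *v q\<^sub>0 = (1 \<bullet> q\<^sub>0) *\<^sub>R \<beta>"
    by (rule matrix_vector_mult_scaled_columns) (simp add: B_def)
  then have "B *v q\<^sub>0 - \<beta> = (1 \<bullet> q\<^sub>0 - 1) *\<^sub>R \<beta>" by (simp add: scaleR_diff_left)
  then have "norm (B *v q\<^sub>0 - \<beta>) = \<rho>" using level beta \<open>0 \<le> \<rho>\<close> by simp
  have A: "A \<in> unitcols" "\<forall>k. 0 \<le> q$k" using max by (simp_all add: is_maximizer_def)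
  let ?x = "A *v q"
  have "(-1) \<bullet> q - (-1) \<le> norm (?x - \<beta>)"
    using norm_mult_unitcols_le[OF A] norm_triangle_ineq2[of \<beta> ?x] beta
    by (simp add: norm_minus_commute)
  then have q: "q = q\<^sub>0" and dist: "norm (?x - \<beta>) \<le> \<rho>"
    using maximizer_eq_competitor[OF max alpha beta \<open>B \<in> unitcols\<close> _ \<open>norm (B *v q\<^sub>0 - \<beta>) = \<rho>\<close>
        \<open>0 \<le> \<rho>\<close>, of "-1" "-1"] q\<^sub>0_pos level
    by (auto simp: q\<^sub>0_def less_imp_le)
  show "\<forall>k. q$k = \<gamma>$k + \<alpha> * (1 - Rf \<gamma>) / (1 + real CARD('n) * \<alpha>)"
    by (simp add: q q\<^sub>0_def \<rho>_def)
  have "1 - \<beta> \<bullet> ?x \<le> norm (?x - \<beta>)"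
    using Cauchy_Schwarz_ineq2[of \<beta> "\<beta> - ?x"] beta
    by (simp add: inner_diff_right dot_square_norm norm_minus_commute)
  then have "1 \<bullet> q \<le> \<beta> \<bullet> ?x" using dist level q by simp
  then show cols: "\<forall>k. column k A = \<beta>"
    using unitcols_columns_eq_if_inner_mult_ge[OF A(1) beta] q q\<^sub>0_pos by blast
  have "Rf q = 1 \<bullet> q" using A(2) by (simp add: Rf_def l1norm_eq_inner_one)
  moreover have "?x = (1 \<bullet> q) *\<^sub>R \<beta>" using cols by (intro matrix_vector_mult_scaled_columns) simp
  ultimately show "?x = Rf q *\<^sub>R \<beta>" by simp
qed

lemma maximizer_dominant_case:
  fixes A :: "real^'n^'m"
  assumes alpha: "0 < \<alpha>" and beta: "norm \<beta> = 1" and gamma: "\<forall>k. 0 < \<gamma>$k"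
    and max: "is_maximizer \<alpha> \<beta> \<gamma> A q"
    and dominant: "1 \<le> rf \<gamma>" and top: "\<gamma>$i = linfnorm \<gamma>"
  shows "q$i = \<gamma>$i - \<alpha> * (rf \<gamma> - 1) / (1 + real CARD('n) * \<alpha>)"
    and "\<forall>j. j \<noteq> i \<longrightarrow> q$j = \<gamma>$j + \<alpha> * (rf \<gamma> - 1) / (1 + real CARD('n) * \<alpha>)"
    and "column i A = \<beta>" and "\<forall>j. j \<noteq> i \<longrightarrow> column j A = - \<beta>"
    and "A *v q = rf q *\<^sub>R \<beta>"
proof -
  define l where "l = pivot_signs i"
  define \<rho> where "\<rho> = (rf \<gamma> - 1) / (1 + real CARD('n) * \<alpha>)"
  define q\<^sub>0 where "q\<^sub>0 = \<gamma> - (\<alpha> * \<rho>) *\<^sub>R l"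
  define B :: "real^'n^'m" where "B = matrix_of_columns (\<lambda>k. l$k *\<^sub>R \<beta>)"
  have den: "0 < 1 + real CARD('n) * \<alpha>" using alpha by (simp add: add_pos_pos)
  have "0 \<le> \<rho>" using dominant den by (simp add: \<rho>_def)
  have "rf \<gamma> = l \<bullet> \<gamma>"
    unfolding l_def using gamma top abs_nth_le_linfnorm[of \<gamma>]
    by (intro rf_eq_inner_pivot_signs) (auto simp: less_imp_le)
  then have level: "l \<bullet> q\<^sub>0 - 1 = \<rho>"
    using den by (simp add: q\<^sub>0_def \<rho>_def l_def inner_diff_right inner_pivot_signs_self field_simps)
  have others_pos: "\<forall>k. k \<noteq> i \<longrightarrow> 0 < q\<^sub>0$k"
    using gamma alpha \<open>0 \<le> \<rho>\<close> by (simp add: q\<^sub>0_def l_def pivot_signs_nth add_pos_nonneg)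
  then have "0 < q\<^sub>0$i" and q\<^sub>0_top: "\<forall>k. q\<^sub>0$k \<le> q\<^sub>0$i"
    using pivot_entry_max_if_inner_pivot_signs_ge_1[of i q\<^sub>0] level \<open>0 \<le> \<rho>\<close> by (auto simp: l_def less_imp_le)
  then have q\<^sub>0_pos: "\<forall>k. 0 < q\<^sub>0$k" using others_pos by metis
  have "B \<in> unitcols" using beta by (simp add: B_def matrix_of_columns_unitcols l_def pivot_signs_nth)
  have "B *v q\<^sub>0 = (l \<bullet> q\<^sub>0) *\<^sub>R \<beta>"
    by (rule matrix_vector_mult_scaled_columns) (simp add: B_def)
  then have "B *v q\<^sub>0 - \<beta> = (l \<bullet> q\<^sub>0 - 1) *\<^sub>R \<beta>" by (simp add: scaleR_diff_left)
  then have "norm (B *v q\<^sub>0 - \<beta>) = \<rho>" using level beta \<open>0 \<le> \<rho>\<close> by simp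
  have A: "A \<in> unitcols" "\<forall>k. 0 \<le> q$k" using max by (simp_all add: is_maximizer_def)
  let ?x = "A *v q" and ?a = "column i A"
  have a_unit: "norm ?a = 1" using A(1) by (simp add: unitcols_def)
  have x_le: "?a \<bullet> ?x \<le> norm ?x" using norm_cauchy_schwarz[of ?a ?x] a_unit by simp
  have "l \<bullet> q - 1 \<le> norm (?x - \<beta>)"
    using inner_pivot_signs_le_inner_column[OF A, of i] x_le norm_triangle_ineq2[of ?x \<beta>] beta
    by (simp add: l_def)
  then have q: "q = q\<^sub>0" and dist: "norm (?x - \<beta>) \<le> \<rho>"
    using maximizer_eq_competitor[OF max alpha beta \<open>B \<in> unitcols\<close> _ \<open>norm (B *v q\<^sub>0 - \<beta>) = \<rho>\<close>
        \<open>0 \<le> \<rho>\<close> q\<^sub>0_def level] q\<^sub>0_pos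
    by (auto simp: less_imp_le)
  show "q$i = \<gamma>$i - \<alpha> * (rf \<gamma> - 1) / (1 + real CARD('n) * \<alpha>)"
    and "\<forall>j. j \<noteq> i \<longrightarrow> q$j = \<gamma>$j + \<alpha> * (rf \<gamma> - 1) / (1 + real CARD('n) * \<alpha>)"
    by (simp_all add: q q\<^sub>0_def \<rho>_def l_def pivot_signs_nth)
  have "?a \<bullet> ?x \<le> l \<bullet> q"
    using x_le norm_triangle_ineq[of "?x - \<beta>" \<beta>] beta dist level q by simp
  then have cols: "column k A = l$k *\<^sub>R ?a" for k
    unfolding l_def using q q\<^sub>0_pos
    by (intro unitcols_columns_eq_pivot_signs_if_inner_mult_le[OF A(1)]) (simp_all add: l_def)
  then have x: "?x = (l \<bullet> q) *\<^sub>R ?a"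
    by (intro matrix_vector_mult_scaled_columns allI)
  then have "?a = \<beta>"
    using unit_vector_eq_if_scaled_dist_le[OF a_unit beta, of "l \<bullet> q"] dist level q \<open>0 \<le> \<rho>\<close>
    by simp
  then show "column i A = \<beta>" .
  show "\<forall>j. j \<noteq> i \<longrightarrow> column j A = - \<beta>"
  proof (intro allI impI)
    fix j assume "j \<noteq> i"
    then show "column j A = - \<beta>" using cols[of j] \<open>?a = \<beta>\<close> by (simp add: l_def pivot_signs_nth)
  qed
  have "rf q = l \<bullet> q"
    unfolding l_def using A(2) q q\<^sub>0_top by (intro rf_eq_inner_pivot_signs) auto
  then show "?x = rf q *\<^sub>R \<beta>" using x \<open>?a = \<beta>\<close> by simp
qed

theorem proposition2:
  fixes \<alpha> :: real and \<beta> :: "real^'m" and \<gamma> :: "real^'n"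
    and A :: "real^'n^'m" and q :: "real^'n"
  assumes n2: "CARD('n) \<ge> 2" and m2: "CARD('m) \<ge> 2"
    and alpha: "\<alpha> > 0" and beta: "norm \<beta> = 1" and gamma: "\<forall>i. \<gamma> $ i > 0"
    and maxi: "is_maximizer \<alpha> \<beta> \<gamma> A q"
  shows
    "(rf \<gamma> \<le> 1 \<and> 1 \<le> Rf \<gamma> \<longrightarrow>
        q = \<gamma> \<and> A *v q = \<beta> \<and>
        ((\<not> (\<exists>\<sigma>::real^'n. (\<forall>i. \<sigma> $ i = 1 \<or> \<sigma> $ i = -1) \<and> \<sigma> \<bullet> \<gamma> = 1)) \<longrightarrow> rank A \<ge> 2))
     \<and>
     (Rf \<gamma> \<le> 1 \<longrightarrow>
        (\<forall>i. q $ i = \<gamma> $ i + \<alpha> * (1 - Rf \<gamma>) / (1 + real CARD('n) * \<alpha>)) \<and>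
        A *v q = Rf q *\<^sub>R \<beta> \<and>
        (\<forall>i. column i A = \<beta>))
     \<and>
     (\<forall>i. rf \<gamma> \<ge> 1 \<and> \<gamma> $ i = linfnorm \<gamma> \<longrightarrow>
        q $ i = \<gamma> $ i - \<alpha> * (rf \<gamma> - 1) / (1 + real CARD('n) * \<alpha>) \<and>
        (\<forall>j. j \<noteq> i \<longrightarrow> q $ j = \<gamma> $ j + \<alpha> * (rf \<gamma> - 1) / (1 + real CARD('n) * \<alpha>)) \<and>
        A *v q = rf q *\<^sub>R \<beta> \<and>
        column i A = \<beta> \<and> (\<forall>j. j \<noteq> i \<longrightarrow> column j A = - \<beta>))"
  using maximizer_balanced_case[OF m2 alpha beta gamma maxi]
    maximizer_short_case[OF alpha beta gamma maxi]
    maximizer_dominant_case[OF alpha beta gamma maxi]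
  by blast

end
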